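(* The kernel $K^{\mathrm{NT}}$ is strictly positive definite on $\mathbb{R}^d$: for any distinct points $x_1,\dots,x_n\in\mathbb{R}^d$, the smallest eigenvalue of the matrix $\big(K^{\mathrm{NT}}(x_i,x_j)\big)_{n\times n}$ is strictly positive.
   Context: Let $\kappa_0(u)=\frac1\pi(\pi-\arccos u)$ and $\kappa_1(u)=\frac1\pi\big[\sqrt{1-u^2}+u(\pi-\arccos u)\big]$ for $u\in[-1,1]$; $\kappa_1^{(r)}$ denotes the $r$-fold composition of $\kappa_1$ ($\kappa_1^{(0)}(u)=u$). Fix an integer $L\ge2$. For $x\in\mathbb{R}^d$ let $\tilde x=(x,1)\in\mathbb{R}^{d+1}$, and for $x,x'\in\mathbb{R}^d$ let $\bar u=\langle\tilde x,\tilde x'\rangle/(\|\tilde x\|\|\tilde x'\|)$. Define $$K^{\mathrm{NT}}(x,x')=\|\tilde x\|\|\tilde x'\|\sum_{r=0}^{L}\kappa_1^{(r)}(\bar u)\prod_{s=r}^{L-1}\kappa_0\big(\kappa_1^{(s)}(\bar u)\big)+1,$$ with an empty product equal to $1$. *)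

theory Defs
  imports Complex_Main "Jordan_Normal_Form.Char_Poly"
begin

definition kappa0 :: "real \<Rightarrow> real" where
  "kappa0 u = (1 / pi) * (pi - arccos u)"

definition kappa1 :: "real \<Rightarrow> real" where
  "kappa1 u = (1 / pi) * (sqrt (1 - u\<^sup>2) + u * (pi - arccos u))"

definition tilde :: "real vec \<Rightarrow> real vec" where
  "tilde x = vec (dim_vec x + 1) (\<lambda>i. if i < dim_vec x then x $ i else 1)"

definition vnorm :: "real vec \<Rightarrow> real" where
  "vnorm v = sqrt (v \<bullet> v)"

definition KNT :: "nat \<Rightarrow> real vec \<Rightarrow> real vec \<Rightarrow> real" where
  "KNT L x x' =
    (let u = (tilde x \<bullet> tilde x') / (vnorm (tilde x) * vnorm (tilde x'))
     in vnorm (tilde x) * vnorm (tilde x') *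
          (\<Sum>r = 0..L. (kappa1 ^^ r) u * (\<Prod>s\<in>{r..<L}. kappa0 ((kappa1 ^^ s) u))) + 1)"

definition gram_NT :: "nat \<Rightarrow> real vec list \<Rightarrow> real mat" where
  "gram_NT L xs = mat (length xs) (length xs) (\<lambda>(i, j). KNT L (xs ! i) (xs ! j))"

end

(*
  Write t_i for the augmented point (x_i, 1) and G_ij for the cosine of the angle between t_i and
  t_j.  Because of the last coordinate 1, distinct points give non-parallel t_i, so G is a Gram
  (hence positive semidefinite) matrix with unit diagonal and off-diagonal entries of modulus < 1.
  The functions kappa0 and kappa1 are power series with nonnegative coefficients converging on
  [-1, 1]; by the Schur product theorem, applying them entrywise preserves positive
  semidefiniteness, and kappa1 also preserves the two other properties of G.  Since kappa0 has
  infinitely many positive coefficients and the Hadamard powers of such a G tend to the identity,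
  kappa0 applied to it dominates a positive multiple of the identity.  Hence the summand r = L - 1
  of the kernel is positive definite, all other summands are positive semidefinite, and the
  quadratic form of the kernel matrix is positive at every nonzero vector, which forces every
  eigenvalue to be positive.
*)

theory Submission
  imports Defs
begin

section \<open>Positive semidefinite kernels on an initial segment of the naturals\<close>

definition qform :: "nat \<Rightarrow> (nat \<Rightarrow> nat \<Rightarrow> real) \<Rightarrow> (nat \<Rightarrow> real) \<Rightarrow> real" where
  "qform n M c = (\<Sum>i<n. \<Sum>j<n. c i * c j * M i j)"

definition psd :: "nat \<Rightarrow> (nat \<Rightarrow> nat \<Rightarrow> real) \<Rightarrow> bool" where
  "psd n M \<longleftrightarrow> (\<forall>i<n. \<forall>j<n. M i j = M j i) \<and> (\<forall>c. 0 \<le> qform n M c)"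

definition coercive :: "nat \<Rightarrow> (nat \<Rightarrow> nat \<Rightarrow> real) \<Rightarrow> real \<Rightarrow> bool" where
  "coercive n M e \<longleftrightarrow> (\<forall>c. e * (\<Sum>i<n. (c i)\<^sup>2) \<le> qform n M c)"

definition strict_correlation :: "nat \<Rightarrow> (nat \<Rightarrow> nat \<Rightarrow> real) \<Rightarrow> bool" where
  "strict_correlation n G \<longleftrightarrow>
     psd n G \<and> (\<forall>i<n. G i i = 1) \<and> (\<forall>i<n. \<forall>j<n. i \<noteq> j \<longrightarrow> \<bar>G i j\<bar> < 1)"

lemma psd_symmetric: "psd n M \<Longrightarrow> i < n \<Longrightarrow> j < n \<Longrightarrow> M i j = M j i"
  by (simp add: psd_def)

lemma psd_qform_nonneg: "psd n M \<Longrightarrow> 0 \<le> qform n M c"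
  by (simp add: psd_def)

lemma qform_sum: "qform n (\<lambda>i j. \<Sum>r\<in>R. M r i j) c = (\<Sum>r\<in>R. qform n (M r) c)"
  unfolding qform_def by (simp add: sum_distrib_left sum.swap[of _ R])

lemma qform_add: "qform n (\<lambda>i j. M i j + N i j) c = qform n M c + qform n N c"
  unfolding qform_def by (simp add: algebra_simps sum.distrib)

lemma qform_diff: "qform n (\<lambda>i j. M i j - N i j) c = qform n M c - qform n N c"
  unfolding qform_def by (simp add: algebra_simps sum_subtractf)

lemma qform_diag: "qform n (\<lambda>i j. if i = j then d i else 0) c = (\<Sum>i<n. (c i)\<^sup>2 * d i)"
  unfolding qform_def
  by (simp add: power2_eq_square if_distrib[where f = "\<lambda>x. _ * x"] mult_ac cong: if_cong)

lemma qform_rescale: "qform n (\<lambda>i j. N i * N j * M i j) c = qform n M (\<lambda>i. c i * N i)"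
  unfolding qform_def by (simp add: mult_ac)

lemma qform_rank_one: "qform n (\<lambda>i j. v i * v j) c = (\<Sum>i<n. c i * v i)\<^sup>2"
  unfolding qform_def power2_eq_square sum_product by (simp add: mult_ac)

lemma qform_cong:
  "(\<And>i j. i < n \<Longrightarrow> j < n \<Longrightarrow> M i j = N i j) \<Longrightarrow> qform n M c = qform n N c"
  unfolding qform_def by (intro sum.cong refl) auto

lemma psd_rescale: "psd n M \<Longrightarrow> psd n (\<lambda>i j. N i * N j * M i j)"
  unfolding psd_def qform_rescale by (auto simp: mult.commute)

lemma psd_const_one: "psd n (\<lambda>_ _. 1)"
  using qform_rank_one[of n "\<lambda>_. 1"] by (simp add: psd_def)

lemma qform_shift_unit:
  assumes "\<forall>i<n. \<forall>j<n. A i j = A j i" and "m < n"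
  shows "qform n A (\<lambda>i. c i + (if i = m then t else 0))
           = qform n A c + 2 * t * (\<Sum>i<n. c i * A i m) + t\<^sup>2 * A m m"
proof -
  have if_sum: "(\<Sum>j<n. if P then f j else 0) = (if P then \<Sum>j<n. f j else 0)" for P and f :: "nat \<Rightarrow> real"
    by simp
  have row: "(\<Sum>j<n. c j * A m j) = (\<Sum>i<n. c i * A i m)"
    using assms by (intro sum.cong) auto
  have "qform n A (\<lambda>i. c i + (if i = m then t else 0))
      = qform n A c + t * (\<Sum>i<n. c i * A i m) + t * (\<Sum>j<n. c j * A m j) + t\<^sup>2 * A m m"
    unfolding qform_def using assms(2)
    by (simp add: algebra_simps sum.distrib sum_distrib_left if_distrib[where f = "\<lambda>x. x * _"]
        if_distrib[where f = "\<lambda>x. _ * x"] power2_eq_square if_sum cong: if_cong)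
  then show ?thesis by (simp add: row)
qed

lemma quadratic_nonneg_discriminant:
  fixes a b c :: real
  assumes "0 \<le> a" and nonneg: "\<And>t. 0 \<le> a * t\<^sup>2 + 2 * b * t + c"
  shows "b\<^sup>2 \<le> a * c"
proof (cases "a = 0")
  case True
  have "b = 0"
  proof (rule ccontr)
    assume "b \<noteq> 0"
    then have "a * (- (c + 1) / (2 * b))\<^sup>2 + 2 * b * (- (c + 1) / (2 * b)) + c = -1"
      using True by (simp add: field_simps)
    with nonneg show False by (metis neg_0_le_iff_le not_one_le_zero)
  qed
  then show ?thesis using True by simp
next
  case False
  with assms(1) have "0 < a" by simp
  have "0 \<le> a * (- b / a)\<^sup>2 + 2 * b * (- b / a) + c" by (rule nonneg)
  also have "\<dots> = c - b\<^sup>2 / a" using \<open>0 < a\<close> by (simp add: field_simps power2_eq_square)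
  finally show ?thesis using \<open>0 < a\<close> by (simp add: field_simps)
qed

lemma psd_diagonal_nonneg:
  assumes A: "psd n A" and m: "m < n"
  shows "0 \<le> A m m"
proof -
  have sym: "\<forall>i<n. \<forall>j<n. A i j = A j i" using A by (simp add: psd_def)
  have "qform n A (\<lambda>i. 0 + (if i = m then 1 else 0)) = A m m"
    using qform_shift_unit[OF sym m, of "\<lambda>_. 0" 1] by (simp add: qform_def)
  then show ?thesis using psd_qform_nonneg[OF A] by metis
qed

lemma psd_column_cauchy_schwarz:
  assumes A: "psd n A" and m: "m < n"
  shows "(\<Sum>i<n. c i * A i m)\<^sup>2 \<le> A m m * qform n A c"
proof (rule quadratic_nonneg_discriminant)
  have sym: "\<forall>i<n. \<forall>j<n. A i j = A j i" using A by (simp add: psd_def)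
  show "0 \<le> A m m * t\<^sup>2 + 2 * (\<Sum>i<n. c i * A i m) * t + qform n A c" for t
    using psd_qform_nonneg[OF A, of "\<lambda>i. c i + (if i = m then t else 0)"]
    unfolding qform_shift_unit[OF sym m] by (simp add: algebra_simps)
  show "0 \<le> A m m" using psd_diagonal_nonneg[OF A m] .
qed

lemma psd_zero_diagonal_imp_zero_column:
  assumes A: "psd n A" and "m < n" "j < n" and "A m m = 0"
  shows "A j m = 0"
proof -
  have "(\<Sum>i<n. (if i = j then 1 else 0) * A i m)\<^sup>2 \<le> 0"
    using psd_column_cauchy_schwarz[OF A \<open>m < n\<close>] \<open>A m m = 0\<close> by simp
  then show ?thesis using \<open>j < n\<close> by (simp add: if_distrib[where f = "\<lambda>x. x * _"] cong: if_cong)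
qed

text \<open>For a zero pivot \<open>A m m = 0\<close> the column \<open>v\<close> is identically zero (\<open>x / 0 = 0\<close>), which is
  consistent because the whole column \<open>m\<close> of \<open>A\<close> then vanishes.\<close>

lemma psd_subtract_pivot:
  assumes A: "psd n A" and m: "m < n"
  defines "v \<equiv> \<lambda>i. A i m / sqrt (A m m)"
  shows "psd n (\<lambda>i j. A i j - v i * v j)" and "\<And>j. j < n \<Longrightarrow> A m j = v m * v j"
proof -
  note sym = psd_symmetric[OF A]
  have diag: "0 \<le> A m m" using psd_diagonal_nonneg[OF A m] .
  show "A m j = v m * v j" if j: "j < n" for j
  proof (cases "A m m = 0")
    case True
    then show ?thesis using psd_zero_diagonal_imp_zero_column[OF A m j] sym[OF m j] by (simp add: v_def)
  next
    case False
    then have "sqrt (A m m) * sqrt (A m m) = A m m" using diag by simp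
    then show ?thesis using False sym[OF m j] by (simp add: v_def field_simps)
  qed
  have "(\<Sum>i<n. c i * v i)\<^sup>2 \<le> qform n A c" for c
  proof (cases "A m m = 0")
    case True
    then show ?thesis using psd_qform_nonneg[OF A] by (simp add: v_def)
  next
    case False
    have "(\<Sum>i<n. c i * v i)\<^sup>2 = (\<Sum>i<n. c i * A i m)\<^sup>2 / A m m"
      using diag by (simp add: v_def sum_divide_distrib[symmetric] power_divide)
    also have "\<dots> \<le> qform n A c"
      using psd_column_cauchy_schwarz[OF A m, of c] False diag by (simp add: divide_le_eq mult.commute)
    finally show ?thesis .
  qed
  then show "psd n (\<lambda>i j. A i j - v i * v j)"
    using sym by (auto simp: psd_def qform_diff qform_rank_one mult.commute)
qed

lemma psd_gram_decomposition:
  assumes "psd n A"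
  obtains V where "\<And>i j. i < n \<Longrightarrow> j < n \<Longrightarrow> A i j = (\<Sum>k<n. V k i * V k j)"
proof -
  \<comment> \<open>Cholesky: a PSD matrix supported on the leading \<open>m \<times> m\<close> block is a sum of \<open>m\<close> rank-one
    terms; subtracting the rank-one term of pivot \<open>m - 1\<close> shrinks the support.\<close>
  have "\<exists>V. \<forall>i<n. \<forall>j<n. A i j = (\<Sum>k<m. V k i * V k j)"
    if "m \<le> n" "psd n A" "\<And>i j. i < n \<Longrightarrow> j < n \<Longrightarrow> m \<le> i \<or> m \<le> j \<Longrightarrow> A i j = 0"
    for m A
    using that
  proof (induction m arbitrary: A)
    case 0
    then show ?case by auto
  next
    case (Suc m)
    then have m: "m < n" by simp
    define v where "v = (\<lambda>i. A i m / sqrt (A m m))"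
    define A' where "A' = (\<lambda>i j. A i j - v i * v j)"
    have psd': "psd n A'" and pivot: "\<And>j. j < n \<Longrightarrow> A m j = v m * v j"
      using psd_subtract_pivot[OF Suc.prems(2) m] unfolding A'_def v_def by auto
    have v_zero: "v i = 0" if "i < n" "m < i" for i
      using Suc.prems(3)[of i m] that m by (simp add: v_def)
    have "A' i j = 0" if ij: "i < n" "j < n" "m \<le> i \<or> m \<le> j" for i j
    proof -
      consider "i = m" | "j = m" | "m < i" | "m < j" using ij(3) by linarith
      then show ?thesis
      proof cases
        case 1
        then show ?thesis using pivot[OF ij(2)] by (simp add: A'_def)
      next
        case 2
        then show ?thesis using pivot[OF ij(1)] psd_symmetric[OF psd' ij(1,2)] by (simp add: A'_def)
      qed (use Suc.prems(3) v_zero ij in \<open>auto simp: A'_def\<close>)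
    qed
    then obtain V where V: "\<forall>i<n. \<forall>j<n. A' i j = (\<Sum>k<m. V k i * V k j)"
      using Suc.IH[OF _ psd'] m by auto
    have "A i j = (\<Sum>k<Suc m. (V(m := v)) k i * (V(m := v)) k j)" if "i < n" "j < n" for i j
      using V[rule_format, OF that] by (simp add: A'_def diff_eq_eq)
    then show ?case by blast
  qed
  from this[of n A] assms that show ?thesis by auto
qed

lemma qform_hadamard_gram:
  "qform n (\<lambda>i j. (\<Sum>k\<in>K. V k i * V k j) * B i j) c = (\<Sum>k\<in>K. qform n B (\<lambda>i. c i * V k i))"
proof -
  have "qform n (\<lambda>i j. (\<Sum>k\<in>K. V k i * V k j) * B i j) c
      = qform n (\<lambda>i j. \<Sum>k\<in>K. V k i * V k j * B i j) c"
    by (simp add: sum_distrib_right)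
  also have "\<dots> = (\<Sum>k\<in>K. qform n (\<lambda>i j. V k i * V k j * B i j) c)"
    by (rule qform_sum)
  finally show ?thesis by (simp add: qform_rescale)
qed

theorem psd_hadamard:
  assumes A: "psd n A" and B: "psd n B"
  shows "psd n (\<lambda>i j. A i j * B i j)"
proof -
  obtain V where V: "\<And>i j. i < n \<Longrightarrow> j < n \<Longrightarrow> A i j = (\<Sum>k<n. V k i * V k j)"
    using psd_gram_decomposition[OF A] by blast
  have "qform n (\<lambda>i j. A i j * B i j) c = qform n (\<lambda>i j. (\<Sum>k<n. V k i * V k j) * B i j) c" for c
    using V by (intro qform_cong) simp
  then show ?thesis
    using A B by (auto simp: psd_def qform_hadamard_gram intro: sum_nonneg)
qed

lemma psd_hadamard_prod:
  "finite S \<Longrightarrow> (\<And>s. s \<in> S \<Longrightarrow> psd n (M s)) \<Longrightarrow> psd n (\<lambda>i j. \<Prod>s\<in>S. M s i j)"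
proof (induction S rule: finite_induct)
  case empty
  then show ?case using psd_const_one by simp
next
  case (insert s S)
  then show ?case using psd_hadamard[of n "M s" "\<lambda>i j. \<Prod>s\<in>S. M s i j"] by simp
qed

lemma psd_hadamard_power: "psd n A \<Longrightarrow> psd n (\<lambda>i j. A i j ^ k)"
  using psd_hadamard_prod[of "{..<k}" n "\<lambda>_. A"] by simp

lemma qform_powser_sums:
  assumes "\<And>i j. i < n \<Longrightarrow> j < n \<Longrightarrow> (\<lambda>k. a k * A i j ^ k) sums F i j"
  shows "(\<lambda>k. a k * qform n (\<lambda>i j. A i j ^ k) c) sums qform n F c"
proof -
  have "(\<lambda>k. \<Sum>i<n. \<Sum>j<n. c i * c j * (a k * A i j ^ k)) sums qform n F c"
    unfolding qform_def using assms by (intro sums_sum sums_mult) auto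
  then show ?thesis unfolding qform_def by (simp add: sum_distrib_left mult_ac)
qed

lemma psd_powser:
  assumes A: "psd n A" and a: "\<And>k. 0 \<le> a k"
    and F: "\<And>i j. i < n \<Longrightarrow> j < n \<Longrightarrow> (\<lambda>k. a k * A i j ^ k) sums F i j"
  shows "psd n F"
  unfolding psd_def
proof (intro conjI allI impI)
  show "F i j = F j i" if "i < n" "j < n" for i j
    using F[OF that] F[OF that(2,1)] psd_symmetric[OF A that] sums_unique2 by force
  show "0 \<le> qform n F c" for c
    using a psd_qform_nonneg[OF psd_hadamard_power[OF A]]
    by (intro sums_le[OF _ sums_zero qform_powser_sums[OF F]]) auto
qed

lemma qform_unit_diagonal_lower_bound:
  assumes diag: "\<And>i. i < n \<Longrightarrow> A i i = 1"
    and off: "\<And>i j. i < n \<Longrightarrow> j < n \<Longrightarrow> i \<noteq> j \<Longrightarrow> \<bar>A i j\<bar> \<le> \<delta>" and "0 \<le> \<delta>"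
  shows "(1 - real n * \<delta>) * (\<Sum>i<n. (c i)\<^sup>2) \<le> qform n A c"
proof -
  have entry: "(if i = j then (c i)\<^sup>2 else 0) - \<delta> * (((c i)\<^sup>2 + (c j)\<^sup>2) / 2) \<le> c i * c j * A i j"
    if "i < n" "j < n" for i j
  proof (cases "i = j")
    case True
    then show ?thesis using diag that \<open>0 \<le> \<delta>\<close> by (simp add: power2_eq_square)
  next
    case False
    have "\<bar>c i * c j\<bar> \<le> ((c i)\<^sup>2 + (c j)\<^sup>2) / 2"
      using sum_squares_bound[of "\<bar>c i\<bar>" "\<bar>c j\<bar>"] by (simp add: abs_mult)
    then have "\<bar>c i * c j * A i j\<bar> \<le> ((c i)\<^sup>2 + (c j)\<^sup>2) / 2 * \<delta>"
      unfolding abs_mult[of "c i * c j"] using off[OF that False] \<open>0 \<le> \<delta>\<close>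
      by (intro mult_mono) auto
    then show ?thesis using False by (simp add: mult.commute)
  qed
  have "(\<Sum>i<n. \<Sum>j<n. (c i)\<^sup>2 + (c j)\<^sup>2) = 2 * real n * (\<Sum>i<n. (c i)\<^sup>2)"
    by (simp add: sum.distrib sum_distrib_left sum.swap[of "\<lambda>i j. (c j)\<^sup>2"] sum_distrib_right mult_ac)
  then have "(\<Sum>i<n. \<Sum>j<n. \<delta> * (((c i)\<^sup>2 + (c j)\<^sup>2) / 2)) = real n * \<delta> * (\<Sum>i<n. (c i)\<^sup>2)"
    by (simp add: sum_distrib_left[symmetric] sum_divide_distrib[symmetric])
  then have "(\<Sum>i<n. \<Sum>j<n. (if i = j then (c i)\<^sup>2 else 0) - \<delta> * (((c i)\<^sup>2 + (c j)\<^sup>2) / 2))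
      = (1 - real n * \<delta>) * (\<Sum>i<n. (c i)\<^sup>2)"
    by (simp add: sum_subtractf algebra_simps)
  moreover have "(\<Sum>i<n. \<Sum>j<n. (if i = j then (c i)\<^sup>2 else 0) - \<delta> * (((c i)\<^sup>2 + (c j)\<^sup>2) / 2))
      \<le> qform n A c"
    unfolding qform_def using entry by (intro sum_mono) auto
  ultimately show ?thesis by linarith
qed

lemma eventually_coercive_hadamard_power:
  assumes A: "strict_correlation n A"
  shows "\<forall>\<^sub>F K in sequentially. coercive n (\<lambda>i j. A i j ^ K) (1/2)"
proof -
  define \<delta> :: real where "\<delta> = 1 / (2 * real n + 1)"
  define P where "P = {(i, j). i < n \<and> j < n \<and> i \<noteq> j}"
  have "finite P" unfolding P_def by (rule finite_subset[of _ "{..<n} \<times> {..<n}"]) auto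
  moreover have "\<forall>p\<in>P. \<forall>\<^sub>F K in sequentially. \<bar>A (fst p) (snd p)\<bar> ^ K < \<delta>"
  proof
    fix p assume "p \<in> P"
    then have "\<bar>A (fst p) (snd p)\<bar> < 1" using A by (auto simp: P_def strict_correlation_def)
    then have "(\<lambda>K. \<bar>A (fst p) (snd p)\<bar> ^ K) \<longlonglongrightarrow> 0" by (intro LIMSEQ_power_zero) auto
    then show "\<forall>\<^sub>F K in sequentially. \<bar>A (fst p) (snd p)\<bar> ^ K < \<delta>"
      by (rule order_tendstoD) (simp add: \<delta>_def)
  qed
  ultimately have "\<forall>\<^sub>F K in sequentially. \<forall>p\<in>P. \<bar>A (fst p) (snd p)\<bar> ^ K < \<delta>"
    by (rule eventually_ball_finite)
  then show ?thesis
  proof (rule eventually_mono)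
    fix K assume small: "\<forall>p\<in>P. \<bar>A (fst p) (snd p)\<bar> ^ K < \<delta>"
    have half: "1/2 \<le> 1 - real n * \<delta>" by (simp add: \<delta>_def field_simps)
    show "coercive n (\<lambda>i j. A i j ^ K) (1/2)"
      unfolding coercive_def
    proof
      fix c
      have "(1 - real n * \<delta>) * (\<Sum>i<n. (c i)\<^sup>2) \<le> qform n (\<lambda>i j. A i j ^ K) c"
      proof (rule qform_unit_diagonal_lower_bound)
        show "A i i ^ K = 1" if "i < n" for i using A that by (simp add: strict_correlation_def)
        show "\<bar>A i j ^ K\<bar> \<le> \<delta>" if "i < n" "j < n" "i \<noteq> j" for i j
          using small that by (force simp: P_def power_abs)
      qed (simp add: \<delta>_def)
      moreover have "1/2 * (\<Sum>i<n. (c i)\<^sup>2) \<le> (1 - real n * \<delta>) * (\<Sum>i<n. (c i)\<^sup>2)"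
        using half by (intro mult_right_mono sum_nonneg) auto
      ultimately show "1/2 * (\<Sum>i<n. (c i)\<^sup>2) \<le> qform n (\<lambda>i j. A i j ^ K) c" by linarith
    qed
  qed
qed

lemma coercive_powser:
  assumes A: "strict_correlation n A" and a: "\<And>k. 0 \<le> a k" and a_pos: "\<And>N. \<exists>k\<ge>N. 0 < a k"
    and F: "\<And>i j. i < n \<Longrightarrow> j < n \<Longrightarrow> (\<lambda>k. a k * A i j ^ k) sums F i j"
  shows "\<exists>e>0. coercive n F e"
proof -
  obtain N where N: "\<And>K. N \<le> K \<Longrightarrow> coercive n (\<lambda>i j. A i j ^ K) (1/2)"
    using eventually_coercive_hadamard_power[OF A] unfolding eventually_sequentially by blast
  obtain K where "N \<le> K" "0 < a K" using a_pos by blast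
  have psd_A: "psd n A" using A by (simp add: strict_correlation_def)
  have "coercive n F (a K / 2)"
    unfolding coercive_def
  proof
    fix c
    let ?t = "\<lambda>k. a k * qform n (\<lambda>i j. A i j ^ k) c"
    have sums: "?t sums qform n F c" by (rule qform_powser_sums[OF F])
    have "0 \<le> ?t k" for k
      using a psd_qform_nonneg[OF psd_hadamard_power[OF psd_A]] by simp
    then have "(\<Sum>k\<in>{K}. ?t k) \<le> suminf ?t"
      using sums by (intro sum_le_suminf) (auto simp: sums_iff)
    then have "?t K \<le> qform n F c" using sums by (simp add: sums_iff)
    moreover have "1/2 * (\<Sum>i<n. (c i)\<^sup>2) \<le> qform n (\<lambda>i j. A i j ^ K) c"
      using N[OF \<open>N \<le> K\<close>] by (simp add: coercive_def)
    then have "a K * (1/2 * (\<Sum>i<n. (c i)\<^sup>2)) \<le> ?t K"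
      by (rule mult_left_mono[OF _ a])
    moreover have "a K / 2 * (\<Sum>i<n. (c i)\<^sup>2) = a K * (1/2 * (\<Sum>i<n. (c i)\<^sup>2))"
      by simp
    ultimately show "a K / 2 * (\<Sum>i<n. (c i)\<^sup>2) \<le> qform n F c" by linarith
  qed
  then show ?thesis using \<open>0 < a K\<close> by (intro exI[of _ "a K / 2"]) auto
qed

lemma coercive_hadamard:
  assumes A: "psd n A" and diag: "\<And>i. i < n \<Longrightarrow> A i i = 1"
    and B_sym: "\<forall>i<n. \<forall>j<n. B i j = B j i" and B: "coercive n B e"
  shows "coercive n (\<lambda>i j. A i j * B i j) e"
proof -
  define B' where "B' = (\<lambda>i j. B i j - (if i = j then e else 0))"
  have qform_B': "qform n B' c = qform n B c - e * (\<Sum>i<n. (c i)\<^sup>2)" for c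
    unfolding B'_def qform_diff qform_diag by (simp add: sum_distrib_left mult_ac)
  have "psd n B'"
    unfolding psd_def qform_B' using B_sym B by (auto simp: B'_def coercive_def)
  have "(\<lambda>i j. A i j * B i j) = (\<lambda>i j. A i j * B' i j + (if i = j then e * A i i else 0))"
    by (auto simp: B'_def fun_eq_iff algebra_simps)
  then have "qform n (\<lambda>i j. A i j * B i j) c
      = qform n (\<lambda>i j. A i j * B' i j) c + e * (\<Sum>i<n. (c i)\<^sup>2)" for c
    using diag by (simp add: qform_add qform_diag sum_distrib_left mult_ac)
  then show ?thesis
    using psd_qform_nonneg[OF psd_hadamard[OF A \<open>psd n B'\<close>]] by (simp add: coercive_def)
qed

lemma coercive_sum:
  assumes "finite R" "r \<in> R" and "coercive n (M r) e" and "\<And>s. s \<in> R \<Longrightarrow> psd n (M s)"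
  shows "coercive n (\<lambda>i j. \<Sum>s\<in>R. M s i j) e"
  unfolding coercive_def qform_sum
proof
  fix c
  have "qform n (M r) c \<le> (\<Sum>s\<in>R. qform n (M s) c)"
    using assms by (intro member_le_sum) (auto intro: psd_qform_nonneg)
  moreover have "e * (\<Sum>i<n. (c i)\<^sup>2) \<le> qform n (M r) c"
    using assms(3) by (simp add: coercive_def)
  ultimately show "e * (\<Sum>i<n. (c i)\<^sup>2) \<le> (\<Sum>s\<in>R. qform n (M s) c)" by linarith
qed

section \<open>Power series of the arc-cosine kernels\<close>

text \<open>The Taylor coefficients of \<open>(1 - t) powr (-1/2)\<close>, namely \<open>(2n choose n) / 4 ^ n\<close>.\<close>

definition invsqrt_coeff :: "nat \<Rightarrow> real" where
  "invsqrt_coeff n = pochhammer (1/2) n / fact n"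

lemma invsqrt_coeff_Suc: "invsqrt_coeff (Suc n) = invsqrt_coeff n * ((real n + 1/2) / (real n + 1))"
  by (simp add: invsqrt_coeff_def pochhammer_Suc field_simps)

lemma invsqrt_coeff_pos: "0 < invsqrt_coeff n"
  by (simp add: invsqrt_coeff_def pochhammer_pos)

lemma invsqrt_coeff_le_1: "invsqrt_coeff n \<le> 1"
proof (induction n)
  case 0
  then show ?case by (simp add: invsqrt_coeff_def)
next
  case (Suc n)
  then show ?case unfolding invsqrt_coeff_Suc by (intro mult_le_one) auto
qed

lemma invsqrt_coeff_bounded: "\<bar>invsqrt_coeff n\<bar> \<le> 1"
  using invsqrt_coeff_pos[of n] invsqrt_coeff_le_1[of n] by simp

lemma diffs_invsqrt_coeff: "diffs invsqrt_coeff n = (real n + 1/2) * invsqrt_coeff n"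
  by (simp add: diffs_def invsqrt_coeff_Suc field_simps)

lemma summable_bounded_powser:
  fixes x :: real
  assumes "\<And>k. \<bar>a k\<bar> \<le> 1" and "\<bar>x\<bar> < 1"
  shows "summable (\<lambda>k. a k * x ^ k)"
proof (rule summable_comparison_test')
  show "summable (\<lambda>k. \<bar>x\<bar> ^ k)" using assms by (simp add: summable_geometric)
  show "norm (a k * x ^ k) \<le> \<bar>x\<bar> ^ k" for k
    using assms(1)[of k] by (simp add: abs_mult power_abs mult_left_le_one_le)
qed

lemma invsqrt_powser_ode:
  fixes x :: real
  assumes x: "\<bar>x\<bar> < 1"
  shows "(\<lambda>n. invsqrt_coeff n * x ^ n) sums (2 * (1 - x) * (\<Sum>n. diffs invsqrt_coeff n * x ^ n))"
proof -
  define D where "D = (\<Sum>n. diffs invsqrt_coeff n * x ^ n)"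
  have "summable (\<lambda>n. diffs invsqrt_coeff n * x ^ n)"
    by (rule termdiff_converges[of x 1]) (use x invsqrt_coeff_bounded in \<open>auto intro: summable_bounded_powser\<close>)
  then have D: "(\<lambda>n. diffs invsqrt_coeff n * x ^ n) sums D" by (simp add: D_def summable_sums)
  then have "(\<lambda>n. (real n + 1/2) * invsqrt_coeff n * x ^ n) sums D"
    by (simp add: diffs_invsqrt_coeff)
  moreover have "(\<lambda>n. real n * invsqrt_coeff n * x ^ n) sums (x * D)"
  proof -
    have "(\<lambda>n. x * (diffs invsqrt_coeff n * x ^ n)) sums (x * D)" by (rule sums_mult[OF D])
    then have "(\<lambda>n. real (Suc n) * invsqrt_coeff (Suc n) * x ^ Suc n) sums (x * D)"
      by (simp add: diffs_def mult_ac del: of_nat_Suc)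
    from sums_Suc[OF this] show ?thesis by simp
  qed
  ultimately have "(\<lambda>n. (real n + 1/2) * invsqrt_coeff n * x ^ n - real n * invsqrt_coeff n * x ^ n)
      sums (D - x * D)"
    by (rule sums_diff)
  then have "(\<lambda>n. invsqrt_coeff n * x ^ n / 2) sums (D - x * D)"
    by (simp add: algebra_simps)
  from sums_mult[OF this, of 2] show ?thesis by (simp add: D_def algebra_simps)
qed

lemma invsqrt_sums:
  fixes t :: real
  assumes t: "\<bar>t\<bar> < 1"
  shows "(\<lambda>n. invsqrt_coeff n * t ^ n) sums inverse (sqrt (1 - t))"
proof -
  \<comment> \<open>By the differential equation, \<open>P x * sqrt (1 - x)\<close> is constant.\<close>
  define P where "P x = (\<Sum>n. invsqrt_coeff n * x ^ n)" for x
  have P': "(P has_real_derivative P x / (2 * (1 - x))) (at x)" if "\<bar>x\<bar> < 1" for x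
  proof -
    have "(P has_real_derivative (\<Sum>n. diffs invsqrt_coeff n * x ^ n)) (at x)"
      unfolding P_def by (rule termdiffs_strong'[of 1])
        (use that invsqrt_coeff_bounded in \<open>auto intro: summable_bounded_powser\<close>)
    moreover have "P x = 2 * (1 - x) * (\<Sum>n. diffs invsqrt_coeff n * x ^ n)"
      using invsqrt_powser_ode[OF that] by (simp add: P_def sums_iff)
    ultimately show ?thesis using that by simp
  qed
  have "P t * sqrt (1 - t) = P 0 * sqrt (1 - 0)"
  proof (rule DERIV_isconst3[of "-1" 1 t 0 "\<lambda>x. P x * sqrt (1 - x)"])
    fix x :: real assume "x \<in> {-1<..<1}"
    then have "\<bar>x\<bar> < 1" and pos: "0 < 1 - x" by auto
    have "((\<lambda>x. P x * sqrt (1 - x)) has_real_derivative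
        P x / (2 * (1 - x)) * sqrt (1 - x) + P x * (inverse (sqrt (1 - x)) / 2 * - 1)) (at x)"
      using P'[OF \<open>\<bar>x\<bar> < 1\<close>] pos by (auto intro!: derivative_eq_intros)
    moreover have "sqrt (1 - x) * sqrt (1 - x) = 1 - x" using pos by simp
    ultimately show "((\<lambda>x. P x * sqrt (1 - x)) has_real_derivative 0) (at x)"
      using pos by (elim DERIV_cong) (simp add: field_simps)
  qed (use t in auto)
  moreover have "P 0 = 1"
    unfolding P_def powser_zero by (simp add: invsqrt_coeff_def)
  ultimately have "P t = inverse (sqrt (1 - t))" using t by (simp add: field_simps)
  then show ?thesis
    using summable_bounded_powser[OF invsqrt_coeff_bounded t] by (simp add: P_def sums_iff)
qed

definition even_spread :: "(nat \<Rightarrow> real) \<Rightarrow> nat \<Rightarrow> real" where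
  "even_spread a k = (if even k then a (k div 2) else 0)"

lemma sums_even_spread:
  assumes "(\<lambda>n. a n * (x\<^sup>2) ^ n) sums s"
  shows "(\<lambda>k. even_spread a k * x ^ k) sums s"
proof -
  have "(\<lambda>n. even_spread a (2 * n) * x ^ (2 * n)) sums s"
    using assms by (simp add: even_spread_def power_mult)
  then show ?thesis
    by (subst (asm) sums_mono_reindex) (auto simp: strict_mono_def even_spread_def elim!: oddE)
qed

definition integ_coeffs :: "real \<Rightarrow> (nat \<Rightarrow> real) \<Rightarrow> nat \<Rightarrow> real" where
  "integ_coeffs c a k = (case k of 0 \<Rightarrow> c | Suc j \<Rightarrow> a j / real (Suc j))"

lemma diffs_integ_coeffs: "diffs (integ_coeffs c a) = a"
  by (simp add: fun_eq_iff diffs_def integ_coeffs_def del: of_nat_Suc)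

lemma integ_coeffs_nonneg: "0 \<le> c \<Longrightarrow> (\<And>k. 0 \<le> a k) \<Longrightarrow> 0 \<le> integ_coeffs c a k"
  by (cases k) (simp_all add: integ_coeffs_def)

lemma integ_coeffs_bounded:
  assumes "\<bar>c\<bar> \<le> 1" and "\<And>k. \<bar>a k\<bar> \<le> 1"
  shows "\<bar>integ_coeffs c a k\<bar> \<le> 1"
proof (cases k)
  case (Suc j)
  have "\<bar>a j\<bar> / real (Suc j) \<le> \<bar>a j\<bar>" by (simp add: divide_le_eq mult_le_cancel_left1)
  then show ?thesis using Suc assms(2)[of j] by (simp add: integ_coeffs_def abs_divide)
qed (simp add: integ_coeffs_def assms)

lemma sums_integ_coeffs:
  assumes a: "\<And>k. \<bar>a k\<bar> \<le> 1" and c: "\<bar>c\<bar> \<le> 1"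
    and f: "\<And>x. \<bar>x\<bar> < 1 \<Longrightarrow> (\<lambda>k. a k * x ^ k) sums f x"
    and g: "\<And>x. \<bar>x\<bar> < 1 \<Longrightarrow> (g has_real_derivative f x) (at x)" and "g 0 = c"
    and u: "\<bar>u\<bar> < 1"
  shows "(\<lambda>k. integ_coeffs c a k * u ^ k) sums g u"
proof -
  define S where "S x = (\<Sum>k. integ_coeffs c a k * x ^ k)" for x
  have bounded: "\<bar>integ_coeffs c a k\<bar> \<le> 1" for k using integ_coeffs_bounded[OF c a] .
  have S': "(S has_real_derivative f x) (at x)" if "\<bar>x\<bar> < 1" for x
  proof -
    have "(S has_real_derivative (\<Sum>k. diffs (integ_coeffs c a) k * x ^ k)) (at x)"
      unfolding S_def
      by (rule termdiffs_strong'[of 1]) (use that bounded in \<open>auto intro: summable_bounded_powser\<close>)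
    then show ?thesis using f[OF that] by (simp add: diffs_integ_coeffs sums_iff)
  qed
  have "S u - g u = S 0 - g 0"
  proof (rule DERIV_isconst3[of "-1" 1 u 0 "\<lambda>x. S x - g x"])
    show "((\<lambda>x. S x - g x) has_real_derivative 0) (at x)" if "x \<in> {-1<..<1}" for x
      using DERIV_diff[OF S' g, of x] that by (simp add: abs_less_iff)
  qed (use u in auto)
  then have "S u = g u" using \<open>g 0 = c\<close> by (simp add: S_def powser_zero integ_coeffs_def)
  then show ?thesis
    using summable_bounded_powser[OF bounded u] by (simp add: S_def sums_iff)
qed

definition arcsin_coeff :: "nat \<Rightarrow> real" where
  "arcsin_coeff = integ_coeffs 0 (even_spread invsqrt_coeff)"

definition arcsin_antideriv_coeff :: "nat \<Rightarrow> real" where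
  "arcsin_antideriv_coeff = integ_coeffs 1 arcsin_coeff"

lemma even_spread_invsqrt_coeff_nonneg: "0 \<le> even_spread invsqrt_coeff k"
  using invsqrt_coeff_pos by (simp add: even_spread_def less_imp_le)

lemma even_spread_invsqrt_coeff_bounded: "\<bar>even_spread invsqrt_coeff k\<bar> \<le> 1"
  using invsqrt_coeff_bounded by (simp add: even_spread_def)

lemma arcsin_coeff_nonneg: "0 \<le> arcsin_coeff k"
  unfolding arcsin_coeff_def by (simp add: integ_coeffs_nonneg even_spread_invsqrt_coeff_nonneg)

lemma arcsin_coeff_bounded: "\<bar>arcsin_coeff k\<bar> \<le> 1"
  unfolding arcsin_coeff_def by (simp add: integ_coeffs_bounded even_spread_invsqrt_coeff_bounded)

lemma arcsin_coeff_odd_pos: "0 < arcsin_coeff (2 * N + 1)"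
  using invsqrt_coeff_pos[of N] by (simp add: arcsin_coeff_def integ_coeffs_def even_spread_def)

lemma arcsin_antideriv_coeff_nonneg: "0 \<le> arcsin_antideriv_coeff k"
  unfolding arcsin_antideriv_coeff_def by (simp add: integ_coeffs_nonneg arcsin_coeff_nonneg)

lemma arcsin_sums:
  assumes "\<bar>u\<bar> < 1"
  shows "(\<lambda>k. arcsin_coeff k * u ^ k) sums arcsin u"
  unfolding arcsin_coeff_def
proof (rule sums_integ_coeffs[OF even_spread_invsqrt_coeff_bounded _ _ _ _ assms])
  show "(\<lambda>k. even_spread invsqrt_coeff k * x ^ k) sums inverse (sqrt (1 - x\<^sup>2))" if "\<bar>x\<bar> < 1" for x
    using that by (intro sums_even_spread invsqrt_sums) (simp add: abs_square_less_1)
  show "(arcsin has_real_derivative inverse (sqrt (1 - x\<^sup>2))) (at x)" if "\<bar>x\<bar> < 1" for x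
    using that by (intro DERIV_arcsin) auto
qed simp_all

lemma arcsin_antideriv_sums:
  assumes "\<bar>u\<bar> < 1"
  shows "(\<lambda>k. arcsin_antideriv_coeff k * u ^ k) sums (sqrt (1 - u\<^sup>2) + u * arcsin u)"
  unfolding arcsin_antideriv_coeff_def
proof (rule sums_integ_coeffs[OF arcsin_coeff_bounded _ arcsin_sums _ _ assms])
  show "((\<lambda>x. sqrt (1 - x\<^sup>2) + x * arcsin x) has_real_derivative arcsin x) (at x)"
    if "\<bar>x\<bar> < 1" for x
  proof -
    have "0 < sqrt (1 - x\<^sup>2)" using that by (simp add: abs_square_less_1)
    moreover have "((\<lambda>x. sqrt (1 - x\<^sup>2) + x * arcsin x) has_real_derivative
        inverse (sqrt (1 - x\<^sup>2)) / 2 * (- (2 * x)) + (arcsin x + x * inverse (sqrt (1 - x\<^sup>2)))) (at x)"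
      using that DERIV_arcsin[of x] \<open>0 < sqrt (1 - x\<^sup>2)\<close>
      by (auto intro!: derivative_eq_intros simp: power2_eq_square abs_less_iff)
    ultimately show ?thesis by (elim DERIV_cong) (simp add: field_simps)
  qed
qed simp_all

lemma nonneg_powser_sums_at_1:
  fixes g :: "real \<Rightarrow> real"
  assumes a: "\<And>k. 0 \<le> a k"
    and sums: "\<And>u. 0 \<le> u \<Longrightarrow> u < 1 \<Longrightarrow> (\<lambda>k. a k * u ^ k) sums g u"
    and cont: "continuous_on {0..1} g"
  shows "a sums g 1"
proof -
  have "(g \<longlongrightarrow> g 1) (at 1 within {0..1})" using cont by (simp add: continuous_on_def)
  then have lim: "(g \<longlongrightarrow> g 1) (at_left 1)" by (simp add: at_within_Icc_at_left)
  have near_1: "\<forall>\<^sub>F u in at_left 1. (\<lambda>k. a k * u ^ k) sums g u \<and> 0 \<le> u \<and> u \<le> 1"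
  proof -
    have "\<forall>\<^sub>F u in at_left 1. u \<in> {0<..<(1::real)}" by (rule eventually_at_left_real) simp
    then show ?thesis by eventually_elim (auto intro: sums)
  qed
  have partial: "(\<Sum>k<N. a k) \<le> g 1" for N
  proof -
    have "((\<lambda>u. \<Sum>k<N. a k * u ^ k) \<longlongrightarrow> (\<Sum>k<N. a k * 1 ^ k)) (at_left 1)"
      by (intro tendsto_intros)
    moreover have "\<forall>\<^sub>F u in at_left 1. (\<Sum>k<N. a k * u ^ k) \<le> g u"
      using near_1
    proof eventually_elim
      case (elim u)
      then have "(\<Sum>k<N. a k * u ^ k) \<le> (\<Sum>k. a k * u ^ k)"
        by (intro sum_le_suminf) (auto simp: sums_iff intro!: mult_nonneg_nonneg a)
      with elim show ?case by (simp add: sums_iff)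
    qed
    ultimately show ?thesis using lim by (simp add: tendsto_le[OF trivial_limit_at_left_real])
  qed
  then have "(\<Sum>k\<le>N. a k) \<le> g 1" for N using partial[of "Suc N"] by (simp add: lessThan_Suc_atMost)
  then have "summable a" by (rule bounded_imp_summable[OF a])
  have "suminf a \<le> g 1" by (rule suminf_le_const[OF \<open>summable a\<close> partial])
  moreover have "g 1 \<le> suminf a"
  proof (rule tendsto_le[OF trivial_limit_at_left_real tendsto_const lim])
    show "\<forall>\<^sub>F u in at_left 1. g u \<le> suminf a"
      using near_1
    proof eventually_elim
      case (elim u)
      then have "(\<Sum>k. a k * u ^ k) \<le> suminf a"
        using \<open>summable a\<close> by (intro suminf_le) (auto simp: sums_iff intro!: mult_left_le power_le_one a)
      with elim show ?case by (simp add: sums_iff)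
    qed
  qed
  ultimately show ?thesis using \<open>summable a\<close> by (simp add: sums_iff)
qed

lemma nonneg_powser_sums_upto_1:
  fixes g :: "real \<Rightarrow> real"
  assumes "\<And>k. 0 \<le> a k" and "\<And>x. \<bar>x\<bar> < 1 \<Longrightarrow> (\<lambda>k. a k * x ^ k) sums g x"
    and "continuous_on {0..1} g" and "-1 < u" "u \<le> 1"
  shows "(\<lambda>k. a k * u ^ k) sums g u"
proof (cases "u = 1")
  case True
  then show ?thesis using nonneg_powser_sums_at_1[of a g] assms by simp
qed (use assms in auto)

lemma nonneg_powser_abs_less:
  fixes u :: real
  assumes a: "\<And>k. 0 \<le> a k" and "0 < j" "0 < a j" and "a sums s"
    and g: "(\<lambda>k. a k * u ^ k) sums g" and u: "\<bar>u\<bar> < 1"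
  shows "\<bar>g\<bar> < s"
proof -
  have "summable a" using \<open>a sums s\<close> by (simp add: sums_iff)
  have le: "a k * \<bar>u\<bar> ^ k \<le> a k" for k
    using a u by (simp add: mult_left_le power_le_one)
  have "summable (\<lambda>k. a k * \<bar>u\<bar> ^ k)"
    using le a by (intro summable_comparison_test'[OF \<open>summable a\<close>]) auto
  then have "\<bar>g\<bar> \<le> (\<Sum>k. a k * \<bar>u\<bar> ^ k)"
    using g summable_rabs[of "\<lambda>k. a k * u ^ k"] a by (simp add: sums_iff abs_mult power_abs)
  moreover have "0 < (\<Sum>k. a k - a k * \<bar>u\<bar> ^ k)"
  proof (rule suminf_pos2)
    show "summable (\<lambda>k. a k - a k * \<bar>u\<bar> ^ k)"
      using \<open>summable a\<close> \<open>summable (\<lambda>k. a k * \<bar>u\<bar> ^ k)\<close> by (rule summable_diff)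
    show "0 < a j - a j * \<bar>u\<bar> ^ j"
      using \<open>0 < j\<close> \<open>0 < a j\<close> u by (simp add: power_less_one_iff abs_less_iff)
  qed (use le in auto)
  moreover have "(\<Sum>k. a k - a k * \<bar>u\<bar> ^ k) = suminf a - (\<Sum>k. a k * \<bar>u\<bar> ^ k)"
    using \<open>summable a\<close> \<open>summable (\<lambda>k. a k * \<bar>u\<bar> ^ k)\<close> by (rule suminf_diff[symmetric])
  ultimately show ?thesis using \<open>a sums s\<close> by (simp add: sums_iff)
qed

text \<open>As \<open>arccos u = pi / 2 - arcsin u\<close>, we have \<open>kappa0 u = 1/2 + arcsin u / pi\<close> and
  \<open>kappa1 u = u / 2 + (sqrt (1 - u\<^sup>2) + u * arcsin u) / pi\<close>.\<close>

definition kappa0_coeff :: "nat \<Rightarrow> real" where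
  "kappa0_coeff k = (if k = 0 then 1/2 else 0) + arcsin_coeff k / pi"

definition kappa1_coeff :: "nat \<Rightarrow> real" where
  "kappa1_coeff k = (if k = 1 then 1/2 else 0) + arcsin_antideriv_coeff k / pi"

lemma kappa0_coeff_nonneg: "0 \<le> kappa0_coeff k"
  using arcsin_coeff_nonneg[of k] by (simp add: kappa0_coeff_def)

lemma kappa1_coeff_nonneg: "0 \<le> kappa1_coeff k"
  using arcsin_antideriv_coeff_nonneg[of k] by (simp add: kappa1_coeff_def)

lemma kappa0_coeff_frequently_pos: "\<exists>k\<ge>N. 0 < kappa0_coeff k"
  using arcsin_coeff_odd_pos[of N] by (intro exI[of _ "2 * N + 1"]) (simp add: kappa0_coeff_def)

lemma sums_monomial:
  fixes c u :: real
  shows "(\<lambda>k. (if k = i then c else 0) * u ^ k) sums (c * u ^ i)"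
proof -
  have "(\<lambda>k. (if k = i then c else 0) * u ^ k) = (\<lambda>k. if k = i then c * u ^ k else 0)"
    by (rule ext) simp
  then show ?thesis using sums_single[of i "\<lambda>k. c * u ^ k"] by simp
qed

lemma kappa0_sums:
  assumes "-1 < u" "u \<le> 1"
  shows "(\<lambda>k. kappa0_coeff k * u ^ k) sums kappa0 u"
proof -
  have "continuous_on {0..1} arcsin" by (rule continuous_on_subset[OF continuous_on_arcsin']) auto
  then have "(\<lambda>k. arcsin_coeff k * u ^ k) sums arcsin u"
    using assms by (intro nonneg_powser_sums_upto_1[OF arcsin_coeff_nonneg arcsin_sums])
  then have "(\<lambda>k. (if k = 0 then 1/2 else 0) * u ^ k + arcsin_coeff k * u ^ k / pi)
      sums (1/2 * u ^ 0 + arcsin u / pi)"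
    by (intro sums_add sums_monomial sums_divide)
  moreover have "1/2 * u ^ 0 + arcsin u / pi = kappa0 u"
    using assms by (simp add: kappa0_def arccos_arcsin_eq field_simps)
  moreover have "kappa0_coeff k * u ^ k = (if k = 0 then 1/2 else 0) * u ^ k + arcsin_coeff k * u ^ k / pi"
    for k by (simp add: kappa0_coeff_def distrib_right)
  ultimately show ?thesis by simp
qed

lemma kappa1_sums:
  assumes "-1 < u" "u \<le> 1"
  shows "(\<lambda>k. kappa1_coeff k * u ^ k) sums kappa1 u"
proof -
  have "continuous_on {0..1} (\<lambda>u::real. sqrt (1 - u\<^sup>2) + u * arcsin u)"
    by (intro continuous_intros continuous_on_subset[OF continuous_on_arcsin']) auto
  then have "(\<lambda>k. arcsin_antideriv_coeff k * u ^ k) sums (sqrt (1 - u\<^sup>2) + u * arcsin u)"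
    using assms
    by (intro nonneg_powser_sums_upto_1[OF arcsin_antideriv_coeff_nonneg arcsin_antideriv_sums])
  then have "(\<lambda>k. (if k = 1 then 1/2 else 0) * u ^ k + arcsin_antideriv_coeff k * u ^ k / pi)
      sums (1/2 * u ^ 1 + (sqrt (1 - u\<^sup>2) + u * arcsin u) / pi)"
    by (intro sums_add sums_monomial sums_divide)
  moreover have "1/2 * u ^ 1 + (sqrt (1 - u\<^sup>2) + u * arcsin u) / pi = kappa1 u"
    using assms by (simp add: kappa1_def arccos_arcsin_eq field_simps)
  moreover have "kappa1_coeff k * u ^ k
      = (if k = 1 then 1/2 else 0) * u ^ k + arcsin_antideriv_coeff k * u ^ k / pi" for k
    by (simp add: kappa1_coeff_def distrib_right)
  ultimately show ?thesis by simp
qed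

lemma abs_kappa1_less_1:
  assumes "\<bar>u\<bar> < 1"
  shows "\<bar>kappa1 u\<bar> < 1"
proof (rule nonneg_powser_abs_less[OF kappa1_coeff_nonneg])
  show "0 < kappa1_coeff 1"
    using arcsin_antideriv_coeff_nonneg[of 1] by (simp add: kappa1_coeff_def add_pos_nonneg)
  show "kappa1_coeff sums 1" using kappa1_sums[of 1] by (simp add: kappa1_def)
  show "(\<lambda>k. kappa1_coeff k * u ^ k) sums kappa1 u" using assms by (intro kappa1_sums) auto
qed (use assms in auto)

section \<open>Positive definiteness of the kernel\<close>

lemma strict_correlation_entry_bounds:
  assumes "strict_correlation n G" "i < n" "j < n"
  shows "-1 < G i j" "G i j \<le> 1"
  using assms by (cases "i = j"; force simp: strict_correlation_def abs_less_iff)+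

lemma psd_kappa0: "strict_correlation n G \<Longrightarrow> psd n (\<lambda>i j. kappa0 (G i j))"
  by (rule psd_powser[OF _ kappa0_coeff_nonneg kappa0_sums])
     (auto simp: strict_correlation_def strict_correlation_entry_bounds)

lemma coercive_kappa0: "strict_correlation n G \<Longrightarrow> \<exists>e>0. coercive n (\<lambda>i j. kappa0 (G i j)) e"
  by (rule coercive_powser[OF _ kappa0_coeff_nonneg kappa0_coeff_frequently_pos kappa0_sums])
     (auto simp: strict_correlation_entry_bounds)

lemma strict_correlation_kappa1:
  assumes G: "strict_correlation n G"
  shows "strict_correlation n (\<lambda>i j. kappa1 (G i j))"
  unfolding strict_correlation_def
proof (intro conjI allI impI)
  show "psd n (\<lambda>i j. kappa1 (G i j))"
    by (rule psd_powser[OF _ kappa1_coeff_nonneg kappa1_sums])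
       (use G in \<open>auto simp: strict_correlation_def strict_correlation_entry_bounds\<close>)
  show "kappa1 (G i i) = 1" if "i < n" for i
    using G that by (simp add: strict_correlation_def kappa1_def)
  show "\<bar>kappa1 (G i j)\<bar> < 1" if "i < n" "j < n" "i \<noteq> j" for i j
    using G that by (intro abs_kappa1_less_1) (simp add: strict_correlation_def)
qed

lemma strict_correlation_kappa1_iterate:
  "strict_correlation n G \<Longrightarrow> strict_correlation n (\<lambda>i j. (kappa1 ^^ s) (G i j))"
  by (induction s) (simp_all add: strict_correlation_kappa1)

definition ntk_profile :: "nat \<Rightarrow> real \<Rightarrow> real" where
  "ntk_profile L u = (\<Sum>r = 0..L. (kappa1 ^^ r) u * (\<Prod>s\<in>{r..<L}. kappa0 ((kappa1 ^^ s) u)))"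

lemma coercive_ntk_profile:
  assumes G: "strict_correlation n G" and "1 \<le> L"
  shows "\<exists>e>0. coercive n (\<lambda>i j. ntk_profile L (G i j)) e"
proof -
  define B where "B s = (\<lambda>i j. (kappa1 ^^ s) (G i j))" for s
  have B: "strict_correlation n (B s)" for s
    using strict_correlation_kappa1_iterate[OF G] by (simp add: B_def)
  define T where "T r = (\<lambda>i j. B r i j * (\<Prod>s\<in>{r..<L}. kappa0 (B s i j)))" for r
  have psd_T: "psd n (T r)" for r
    unfolding T_def using B
    by (intro psd_hadamard psd_hadamard_prod psd_kappa0) (auto simp: strict_correlation_def)
  obtain e where "0 < e" and e: "coercive n (\<lambda>i j. kappa0 (B (L - 1) i j)) e"
    using coercive_kappa0[OF B] by blast
  have "coercive n (\<lambda>i j. B (L - 1) i j * kappa0 (B (L - 1) i j)) e"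
    using B[of "L - 1"] psd_kappa0[OF B] e
    by (intro coercive_hadamard) (auto simp: strict_correlation_def psd_def)
  moreover have "{L - 1..<L} = {L - 1}" using \<open>1 \<le> L\<close> by auto
  ultimately have "coercive n (T (L - 1)) e" by (simp add: T_def)
  then have "coercive n (\<lambda>i j. \<Sum>r = 0..L. T r i j) e"
    using psd_T by (intro coercive_sum) auto
  then show ?thesis using \<open>0 < e\<close> by (auto simp: ntk_profile_def T_def B_def)
qed

lemma ntk_qform_pos:
  assumes G: "strict_correlation n G" and "1 \<le> L" and N: "\<And>i. i < n \<Longrightarrow> 0 < N i"
    and "i < n" "c i \<noteq> 0"
  shows "0 < qform n (\<lambda>i j. N i * N j * ntk_profile L (G i j) + 1) c"
proof -
  obtain e where "0 < e" and e: "coercive n (\<lambda>i j. ntk_profile L (G i j)) e"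
    using coercive_ntk_profile[OF G \<open>1 \<le> L\<close>] by blast
  have "0 < (c i * N i)\<^sup>2" using N[of i] assms(4,5) by simp
  also have "\<dots> \<le> (\<Sum>i<n. (c i * N i)\<^sup>2)" by (rule member_le_sum) (use assms(4) in auto)
  finally have "0 < e * (\<Sum>i<n. (c i * N i)\<^sup>2)" using \<open>0 < e\<close> by simp
  also have "\<dots> \<le> qform n (\<lambda>i j. ntk_profile L (G i j)) (\<lambda>i. c i * N i)"
    using e by (simp add: coercive_def)
  also have "\<dots> \<le> qform n (\<lambda>i j. N i * N j * ntk_profile L (G i j) + 1) c"
    using psd_qform_nonneg[OF psd_const_one] by (simp add: qform_add qform_rescale)
  finally show ?thesis .
qed

section \<open>Augmented points and eigenvalues\<close>

lemma psd_scalar_prod_gram: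
  fixes w :: "nat \<Rightarrow> real vec"
  assumes dim: "\<And>i. i < n \<Longrightarrow> dim_vec (w i) = m"
  shows "psd n (\<lambda>i j. w i \<bullet> w j)"
  unfolding psd_def
proof (intro conjI allI impI)
  show "w i \<bullet> w j = w j \<bullet> w i" if "i < n" "j < n" for i j
    using dim that by (simp add: scalar_prod_def mult.commute)
  have "qform n (\<lambda>i j. w i \<bullet> w j) c = qform n (\<lambda>i j. \<Sum>l\<in>{0..<m}. w i $ l * w j $ l) c" for c
    using dim by (intro qform_cong) (simp add: scalar_prod_def)
  then show "0 \<le> qform n (\<lambda>i j. w i \<bullet> w j) c" for c
    by (simp add: qform_sum qform_rank_one sum_nonneg)
qed

lemma lagrange_identity:
  fixes p q :: "'a \<Rightarrow> real"
  shows "2 * ((\<Sum>l\<in>M. (p l)\<^sup>2) * (\<Sum>l\<in>M. (q l)\<^sup>2) - (\<Sum>l\<in>M. p l * q l)\<^sup>2)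
         = (\<Sum>a\<in>M. \<Sum>b\<in>M. (p a * q b - p b * q a)\<^sup>2)"
proof -
  have "(\<Sum>a\<in>M. \<Sum>b\<in>M. (p a * q b - p b * q a)\<^sup>2) =
        (\<Sum>a\<in>M. \<Sum>b\<in>M. (p a)\<^sup>2 * (q b)\<^sup>2) + (\<Sum>a\<in>M. \<Sum>b\<in>M. (p b)\<^sup>2 * (q a)\<^sup>2)
        - 2 * (\<Sum>a\<in>M. \<Sum>b\<in>M. (p a * q a) * (p b * q b))"
    by (simp add: power2_eq_square algebra_simps sum.distrib sum_subtractf sum_distrib_left)
  also have "(\<Sum>a\<in>M. \<Sum>b\<in>M. (p a)\<^sup>2 * (q b)\<^sup>2) = (\<Sum>l\<in>M. (p l)\<^sup>2) * (\<Sum>l\<in>M. (q l)\<^sup>2)"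
    by (simp add: sum_product)
  also have "(\<Sum>a\<in>M. \<Sum>b\<in>M. (p b)\<^sup>2 * (q a)\<^sup>2) = (\<Sum>l\<in>M. (p l)\<^sup>2) * (\<Sum>l\<in>M. (q l)\<^sup>2)"
    by (simp add: sum_product sum.swap[of "\<lambda>a b. (p b)\<^sup>2 * (q a)\<^sup>2"] mult.commute)
  also have "(\<Sum>a\<in>M. \<Sum>b\<in>M. (p a * q a) * (p b * q b)) = (\<Sum>l\<in>M. p l * q l)\<^sup>2"
    by (simp add: sum_product power2_eq_square)
  finally show ?thesis by simp
qed

lemma strict_cauchy_schwarz_sum:
  fixes p q :: "'a \<Rightarrow> real"
  assumes M: "finite M" and "a \<in> M" "b \<in> M" and "p a * q b \<noteq> p b * q a"
  shows "(\<Sum>l\<in>M. p l * q l)\<^sup>2 < (\<Sum>l\<in>M. (p l)\<^sup>2) * (\<Sum>l\<in>M. (q l)\<^sup>2)"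
proof -
  have "0 < (p a * q b - p b * q a)\<^sup>2" using assms(4) by simp
  also have "\<dots> \<le> (\<Sum>b\<in>M. (p a * q b - p b * q a)\<^sup>2)"
    by (rule member_le_sum) (use assms in auto)
  also have "\<dots> \<le> (\<Sum>a\<in>M. \<Sum>b\<in>M. (p a * q b - p b * q a)\<^sup>2)"
    by (rule member_le_sum[where f = "\<lambda>a. \<Sum>b\<in>M. (p a * q b - p b * q a)\<^sup>2"])
       (use assms in \<open>auto intro: sum_nonneg\<close>)
  also have "\<dots> = 2 * ((\<Sum>l\<in>M. (p l)\<^sup>2) * (\<Sum>l\<in>M. (q l)\<^sup>2) - (\<Sum>l\<in>M. p l * q l)\<^sup>2)"
    by (rule lagrange_identity[symmetric])
  finally show ?thesis by simp
qed

lemma abs_scalar_prod_less_vnorm: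
  fixes v w :: "real vec"
  assumes "dim_vec w = dim_vec v" "a < dim_vec v" "b < dim_vec v" "v $ a * w $ b \<noteq> v $ b * w $ a"
  shows "\<bar>v \<bullet> w\<bar> < vnorm v * vnorm w"
proof -
  have "(v \<bullet> w)\<^sup>2 < (v \<bullet> v) * (w \<bullet> w)"
    using strict_cauchy_schwarz_sum[of "{0..<dim_vec v}" a b "\<lambda>l. v $ l" "\<lambda>l. w $ l"] assms
    by (simp add: scalar_prod_def power2_eq_square)
  then have "sqrt ((v \<bullet> w)\<^sup>2) < sqrt ((v \<bullet> v) * (w \<bullet> w))" by (rule real_sqrt_less_mono)
  then show ?thesis by (simp add: vnorm_def real_sqrt_mult)
qed

lemma dim_tilde [simp]: "dim_vec (tilde x) = dim_vec x + 1"
  by (simp add: tilde_def)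

lemma tilde_nth: "l < dim_vec x + 1 \<Longrightarrow> tilde x $ l = (if l < dim_vec x then x $ l else 1)"
  by (simp add: tilde_def)

lemma scalar_prod_tilde_self_ge_1: "1 \<le> tilde x \<bullet> tilde x"
proof -
  have "(tilde x $ dim_vec x)\<^sup>2 \<le> (\<Sum>l\<in>{0..<dim_vec x + 1}. (tilde x $ l)\<^sup>2)"
    by (rule member_le_sum) auto
  then show ?thesis by (simp add: scalar_prod_def power2_eq_square tilde_nth)
qed

lemma vnorm_tilde_pos: "0 < vnorm (tilde x)"
  using scalar_prod_tilde_self_ge_1[of x] by (simp add: vnorm_def)

definition augmented_cosine :: "real vec list \<Rightarrow> nat \<Rightarrow> nat \<Rightarrow> real" where
  "augmented_cosine xs i j =
     (tilde (xs ! i) \<bullet> tilde (xs ! j)) / (vnorm (tilde (xs ! i)) * vnorm (tilde (xs ! j)))"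

lemma strict_correlation_augmented_cosine:
  assumes dim: "\<forall>x\<in>set xs. dim_vec x = d" and "distinct xs"
  shows "strict_correlation (length xs) (augmented_cosine xs)"
  unfolding strict_correlation_def
proof (intro conjI allI impI)
  let ?t = "\<lambda>i. tilde (xs ! i)" and ?N = "\<lambda>i. 1 / vnorm (tilde (xs ! i))"
  have dim_t: "dim_vec (?t i) = d + 1" if "i < length xs" for i using dim that by simp
  have "psd (length xs) (\<lambda>i j. ?N i * ?N j * (?t i \<bullet> ?t j))"
    using dim_t by (intro psd_rescale psd_scalar_prod_gram) auto
  moreover have "?N i * ?N j * (?t i \<bullet> ?t j) = augmented_cosine xs i j" for i j
    by (simp add: augmented_cosine_def)
  ultimately show "psd (length xs) (augmented_cosine xs)" by simp
  show "augmented_cosine xs i i = 1" for i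
    using scalar_prod_tilde_self_ge_1[of "xs ! i"] by (simp add: augmented_cosine_def vnorm_def)
  show "\<bar>augmented_cosine xs i j\<bar> < 1" if ij: "i < length xs" "j < length xs" "i \<noteq> j" for i j
  proof -
    have "xs ! i \<noteq> xs ! j" using \<open>distinct xs\<close> ij by (simp add: nth_eq_iff_index_eq)
    moreover have "dim_vec (xs ! i) = d" "dim_vec (xs ! j) = d" using dim ij by auto
    ultimately obtain l where "l < d" "xs ! i $ l \<noteq> xs ! j $ l" by (metis eq_vecI)
    then have "\<bar>?t i \<bullet> ?t j\<bar> < vnorm (?t i) * vnorm (?t j)"
      using dim_t ij \<open>dim_vec (xs ! i) = d\<close> \<open>dim_vec (xs ! j) = d\<close>
      by (intro abs_scalar_prod_less_vnorm[where a = l and b = d]) (auto simp: tilde_nth)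
    then show ?thesis
      using vnorm_tilde_pos[of "xs ! i"] vnorm_tilde_pos[of "xs ! j"]
      by (simp add: augmented_cosine_def abs_divide)
  qed
qed

lemma scalar_prod_mult_mat_vec_qform:
  fixes A :: "real mat"
  assumes "A \<in> carrier_mat n n" "v \<in> carrier_vec n"
  shows "v \<bullet> (A *\<^sub>v v) = qform n (\<lambda>i j. A $$ (i, j)) (\<lambda>i. v $ i)"
  using assms unfolding qform_def
  by (auto simp: scalar_prod_def sum_distrib_left atLeast0LessThan mult_ac intro!: sum.cong)

lemma eigenvalue_pos_if_qform_pos:
  fixes A :: "real mat"
  assumes A: "A \<in> carrier_mat n n"
    and pos: "\<And>c i. i < n \<Longrightarrow> c i \<noteq> 0 \<Longrightarrow> 0 < qform n (\<lambda>i j. A $$ (i, j)) c"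
    and "eigenvalue A k"
  shows "0 < k"
proof -
  obtain v where v: "v \<in> carrier_vec n" "v \<noteq> 0\<^sub>v n" "A *\<^sub>v v = k \<cdot>\<^sub>v v"
    using \<open>eigenvalue A k\<close> A unfolding eigenvalue_def eigenvector_def by auto
  obtain i where "i < n" "v $ i \<noteq> 0"
    using v(1,2) by (metis carrier_vecD eq_vecI index_zero_vec)
  then have "0 < qform n (\<lambda>i j. A $$ (i, j)) (\<lambda>i. v $ i)" by (intro pos)
  also have "\<dots> = k * (v \<bullet> v)"
    using v by (simp add: scalar_prod_mult_mat_vec_qform[OF A, symmetric])
  finally have "0 < k * (v \<bullet> v)" .
  moreover have "0 \<le> v \<bullet> v" by (simp add: scalar_prod_def sum_nonneg)
  ultimately show ?thesis by (simp add: zero_less_mult_iff)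
qed

theorem proposition9:
  fixes L d :: nat and xs :: "real vec list"
  assumes "L \<ge> 2"
    and "\<forall>x\<in>set xs. dim_vec x = d"
    and "distinct xs"
  shows "\<forall>k. eigenvalue (gram_NT L xs) k \<longrightarrow> k > 0"
proof (intro allI impI)
  fix k assume eigen: "eigenvalue (gram_NT L xs) k"
  let ?n = "length xs" and ?N = "\<lambda>i. vnorm (tilde (xs ! i))"
  have G: "strict_correlation ?n (augmented_cosine xs)"
    using assms(2,3) by (rule strict_correlation_augmented_cosine)
  have entry: "gram_NT L xs $$ (i, j) = ?N i * ?N j * ntk_profile L (augmented_cosine xs i j) + 1"
    if "i < ?n" "j < ?n" for i j
    using that by (simp add: gram_NT_def KNT_def ntk_profile_def augmented_cosine_def Let_def)
  show "0 < k"
  proof (rule eigenvalue_pos_if_qform_pos[OF _ _ eigen])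
    show "gram_NT L xs \<in> carrier_mat ?n ?n" by (simp add: gram_NT_def)
    show "0 < qform ?n (\<lambda>i j. gram_NT L xs $$ (i, j)) c" if "i < ?n" "c i \<noteq> 0" for c i
    proof -
      have "0 < qform ?n (\<lambda>i j. ?N i * ?N j * ntk_profile L (augmented_cosine xs i j) + 1) c"
        by (rule ntk_qform_pos[where i = i and c = c, OF G _ _ that]) (use \<open>L \<ge> 2\<close> vnorm_tilde_pos in auto)
      then show ?thesis by (simp add: qform_cong[OF entry])
    qed
  qed
qed

end
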